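(* Let $p\geq 5$ be a prime, $L/\mathbb{Q}_p$ a finite extension with ring of integers $\mathcal{O}_L$, $k\geq 2$ an even integer, $e_0\in L$, and $\Lambda_{(k,r_0)}:=\mathcal{O}_L\left[\left[\frac{X-k}{e_0}\right]\right]$. Let $B^\circ(r_0)_{\rm cl}$ be the (infinite) set of classical weights of the Coleman family described in the context, and for each $\kappa\in B^\circ(r_0)_{\rm cl}$ let $P_\kappa\in\Lambda_{(k,r_0)}$ be a generator of the kernel of the evaluation map $\pi_\kappa:\Lambda_{(k,r_0)}\to\mathcal{O}_L$, $X\mapsto\kappa$, and put $(P_\kappa):=\Lambda_{(k,r_0)}[1/p]\cdot P_\kappa$. Let $h=v(\lambda)\geq 0$. Then $$\bigcap_{\kappa\in B^\circ(r_0)_{\rm cl}}\,(P_\kappa)\,\widehat{\otimes}_{\mathbb{Q}_p}\,\mathcal{H}_{v(\lambda)}(\widetilde{\Gamma}_{\rm ac})_L=0,$$ the intersection being taken inside $\Lambda_{(k,r_0)}[1/p]\,\widehat{\otimes}_{\mathbb{Q}_p}\,\mathcal{H}_{v(\lambda)}(\widetilde{\Gamma}_{\rm ac})_L$.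
   Context: Let $K$ be an imaginary quadratic field in which $p$ splits, $K_{p^\infty}$ its ring class field of conductor $p^\infty$ and $\widetilde{\Gamma}_{\rm ac}=\mathrm{Gal}(K_{p^\infty}/K)=\Gamma_{\rm ac}\times\Delta_{\rm ac}$ with $\Gamma_{\rm ac}\cong\mathbb{Z}_p$ and $\Delta_{\rm ac}$ finite; fix a topological generator $\gamma_{\rm ac}$ of $\Gamma_{\rm ac}$. For real $h\geq 0$ define on $\mathbb{Q}_p[[X]]$ the valuation $v_h(\sum_n c_nX^n)=\inf_n\{\mathrm{ord}_p(c_n)+h\ell(n)\}$ where $\ell(0)=0$ and $\ell(n)=\frac{\log n}{\log p}+1$ for $n\geq1$; let $\mathcal{H}_h=\{F: v_h(F)>-\infty\}$. Substituting $X=\gamma_{\rm ac}-1$ gives $\mathcal{H}_h(\Gamma_{\rm ac})$; set $\mathcal{H}_h(\widetilde{\Gamma}_{\rm ac}):=\mathcal{H}_h(\Gamma_{\rm ac})\otimes_{\Lambda(\Gamma_{\rm ac})}\mathbb{Z}_p[[\widetilde{\Gamma}_{\rm ac}]]$ and $\mathcal{H}_h(\widetilde{\Gamma}_{\rm ac})_L:=\mathcal{H}_h(\widetilde{\Gamma}_{\rm ac})\otimes_{\mathbb{Z}_p}L$. The ring $\Lambda_{(k,r_0)}$ is the ring of functions bounded by $1$ on an open disc in weight space about $k$ (with $r_0=p^{\mathrm{ord}_p(e_0)}<p^{(p-1)/(p-2)}$). A Coleman family $\mathbf{f}$ of constant slope $v(\lambda)$ is given over this disc, and $B^\circ(r_0)_{\rm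 cl}$ denotes its set of classical points: an infinite set of integers $\kappa$ with $|\kappa-k|_p<|e_0|_p$ at which $\mathbf{f}$ specializes to a classical eigenform of weight $\kappa$. *)

theory Defs
  imports Complex_Main "HOL-Computational_Algebra.Formal_Power_Series"
begin

definition abs_value :: "('a::field \<Rightarrow> real) \<Rightarrow> bool" where
  "abs_value av \<longleftrightarrow> (\<forall>x. av x \<ge> 0) \<and> (\<forall>x. av x = 0 \<longleftrightarrow> x = 0)
     \<and> (\<forall>x y. av (x * y) = av x * av y) \<and> (\<forall>x y. av (x + y) \<le> max (av x) (av y))"

definition av_converges :: "('a::field \<Rightarrow> real) \<Rightarrow> (nat \<Rightarrow> 'a) \<Rightarrow> 'a \<Rightarrow> bool" where
  "av_converges av s l \<longleftrightarrow> (\<lambda>n. av (s n - l)) \<longlonglongrightarrow> 0"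

definition av_complete :: "('a::field \<Rightarrow> real) \<Rightarrow> bool" where
  "av_complete av \<longleftrightarrow> (\<forall>s. (\<forall>\<epsilon>>0. \<exists>N. \<forall>m\<ge>N. \<forall>n\<ge>N. av (s m - s n) < \<epsilon>)
                            \<longrightarrow> (\<exists>l. av_converges av s l))"

text \<open>The copy of Q_p inside L: the closure of Q.\<close>
definition Qp_closure :: "('a::field_char_0 \<Rightarrow> real) \<Rightarrow> 'a set" where
  "Qp_closure av = {x. \<forall>\<epsilon>>0. \<exists>q::rat. av (x - of_rat q) < \<epsilon>}"

text \<open>L (the type 'a with absolute value av) is a finite extension of Q_p, |p| = 1/p.\<close>
definition finite_ext_Qp :: "nat \<Rightarrow> ('a::field_char_0 \<Rightarrow> real) \<Rightarrow> bool" where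
  "finite_ext_Qp p av \<longleftrightarrow> abs_value av \<and> av (of_nat p) = 1 / real p \<and> av_complete av \<and>
     (\<exists>bs::'a list. \<forall>x. \<exists>c. (\<forall>i<length bs. c i \<in> Qp_closure av) \<and>
                              x = (\<Sum>i<length bs. c i * bs ! i))"

definition int_ring :: "('a::field \<Rightarrow> real) \<Rightarrow> 'a set" where
  "int_ring av = {x. av x \<le> 1}"

section \<open>Lambda_(k,r0) = int_ring[[Y]], Y = (X - k)/e0\<close>

definition Lambda :: "('a::field \<Rightarrow> real) \<Rightarrow> 'a fps set" where
  "Lambda av = {f. \<forall>m. fps_nth f m \<in> int_ring av}"

definition eval_at :: "('a::field \<Rightarrow> real) \<Rightarrow> 'a fps \<Rightarrow> 'a \<Rightarrow> 'a \<Rightarrow> bool" where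
  "eval_at av f a s \<longleftrightarrow> av_converges av (\<lambda>N. \<Sum>m<N. fps_nth f m * a ^ m) s"

definition ell :: "nat \<Rightarrow> nat \<Rightarrow> real" where
  "ell p n = (if n = 0 then 0 else log (real p) (real n) + 1)"

text \<open>Elements: for each delta in Delta_ac (the finite type 'd), a two-variable series
  sum_{m,n} c_{m,n} Y^m Z^n (Z = gamma_ac - 1), stored as fps_nth (fps_nth (F d) n) m, with coefficients in L
  satisfying ord_p(c_{m,n}) + h ell(n) >= -C, i.e. |c_{m,n}| <= p^(C + h ell(n)).\<close>
definition HLam_ring :: "nat \<Rightarrow> ('a::field \<Rightarrow> real) \<Rightarrow> real \<Rightarrow> ('d \<Rightarrow> 'a fps fps) set" where
  "HLam_ring p av h = {F. \<exists>C. \<forall>d n m. av (fps_nth (fps_nth (F d) n) m) \<le> real p powr (C + h * ell p n)}"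

definition P_ideal :: "nat \<Rightarrow> ('a::field \<Rightarrow> real) \<Rightarrow> real \<Rightarrow> 'a fps \<Rightarrow> ('d \<Rightarrow> 'a fps fps) set" where
  "P_ideal p av h P = {(\<lambda>d. fps_const P * G d) | G. G \<in> HLam_ring p av h}"

end

theory Submission
  imports Defs
begin

text \<open>
  Let \<open>F\<close> lie in every ideal \<open>(P\<^sub>\<kappa>)\<close>. Each coefficient series \<open>f\<close> of \<open>F\<close> (in the weight
  variable) is then \<open>P\<^sub>\<kappa>\<close> times a series with bounded coefficients; after scaling by a power
  of \<open>p\<close> the cofactor lies in \<open>\<Lambda>\<close>, so \<open>f\<close> has bounded coefficients and vanishes at
  \<open>y\<^sub>\<kappa> = (\<kappa> - k)/e\<^sub>0\<close> for every classical weight \<open>\<kappa>\<close>. Since \<open>|\<kappa> - k|\<close> takes values in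
  \<open>p\<^sup>\<int>\<close>, all \<open>y\<^sub>\<kappa>\<close> lie in one disc of radius \<open>\<rho> < 1\<close>, so \<open>f\<close> is a bounded power
  series with infinitely many zeros in that disc and must vanish.

  For the last step pick \<open>N\<close> maximal with \<open>|f\<^sub>N| \<rho>\<^sup>N\<close> above a fixed positive level, and take
  the divided difference over \<open>N + 1\<close> zeros. It kills \<open>z\<^sup>n\<close> for \<open>n < N\<close> and maps it to the complete
  homogeneous polynomial \<open>h\<^sub>n\<^sub>-\<^sub>N\<close> of the zeros otherwise, so on partial sums it tends to \<open>0\<close>
  while, by the ultrametric inequality, it has constant absolute value \<open>|f\<^sub>N| > 0\<close>.
\<close>

section \<open>Non-archimedean absolute values\<close>

lemma abs_value_nonneg: "abs_value av \<Longrightarrow> av x \<ge> 0"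
  by (simp add: abs_value_def)

lemma abs_value_eq_0_iff: "abs_value av \<Longrightarrow> av x = 0 \<longleftrightarrow> x = 0"
  by (simp add: abs_value_def)

lemma abs_value_zero: "abs_value av \<Longrightarrow> av 0 = 0"
  by (simp add: abs_value_def)

lemma abs_value_pos: "abs_value av \<Longrightarrow> x \<noteq> 0 \<Longrightarrow> av x > 0"
  using abs_value_nonneg abs_value_eq_0_iff by (metis less_eq_real_def)

lemma abs_value_mult: "abs_value av \<Longrightarrow> av (x * y) = av x * av y"
  by (simp add: abs_value_def)

lemma abs_value_add_le: "abs_value av \<Longrightarrow> av (x + y) \<le> max (av x) (av y)"
  by (simp add: abs_value_def)

lemma abs_value_one: assumes "abs_value av" shows "av 1 = 1"
  using abs_value_mult[OF assms, of 1 1] abs_value_eq_0_iff[OF assms, of 1] by simp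

lemma abs_value_minus: assumes "abs_value av" shows "av (- x) = av x"
proof -
  have "av (- 1) * av (- 1) = 1"
    using abs_value_mult[OF assms, of "- 1" "- 1"] abs_value_one[OF assms] by simp
  then have "av (- 1) = 1"
    using abs_value_nonneg[OF assms, of "- 1"] by (metis abs_of_nonneg abs_square_eq_1 power2_eq_square)
  then show ?thesis using abs_value_mult[OF assms, of "- 1" x] by simp
qed

lemma abs_value_diff_le: "abs_value av \<Longrightarrow> av (x - y) \<le> max (av x) (av y)"
  using abs_value_add_le[of av x "- y"] abs_value_minus[of av y] by simp

lemma abs_value_divide: assumes "abs_value av" shows "av (x / y) = av x / av y"
proof (cases "y = 0")
  case True
  then show ?thesis using abs_value_zero[OF assms] by simp
next
  case False
  then show ?thesis
    using abs_value_mult[OF assms, of "x / y" y] abs_value_pos[OF assms False] by simp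
qed

lemma abs_value_power: "abs_value av \<Longrightarrow> av (x ^ n) = av x ^ n"
  by (induction n) (simp_all add: abs_value_one abs_value_mult)

lemma abs_value_sum_le:
  assumes "abs_value av" "\<forall>i\<in>S. av (g i) \<le> c" "0 \<le> c"
  shows "av (sum g S) \<le> c"
  using assms(2)
proof (induction S rule: infinite_finite_induct)
  case (insert x F)
  then show ?case using abs_value_add_le[OF assms(1), of "g x" "sum g F"] by auto
qed (use abs_value_zero[OF assms(1)] assms(3) in simp_all)

lemma abs_value_sum_less:
  assumes "abs_value av" "finite S" "\<forall>i\<in>S. av (g i) < c" "0 < c"
  shows "av (sum g S) < c"
  using assms(2,3)
proof (induction S rule: finite_induct)
  case (insert x F)
  then show ?case using abs_value_add_le[OF assms(1), of "g x" "sum g F"] by auto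
qed (use abs_value_zero[OF assms(1)] assms(4) in simp)

lemma abs_value_add_eq_left:
  assumes "abs_value av" "av y < av x"
  shows "av (x + y) = av x"
  using abs_value_add_le[OF assms(1), of x y] abs_value_diff_le[OF assms(1), of "x + y" y] assms(2)
  by auto

lemma abs_value_of_int_le_1: assumes "abs_value av" shows "av (of_int n) \<le> 1"
proof -
  have nat_le_1: "av (of_nat m) \<le> 1" for m
  proof (induction m)
    case (Suc m)
    then show ?case using abs_value_add_le[OF assms, of 1 "of_nat m"] abs_value_one[OF assms] by simp
  qed (simp add: abs_value_zero[OF assms])
  show ?thesis
    using nat_le_1[of "nat n"] nat_le_1[of "nat (- n)"] abs_value_minus[OF assms, of "of_nat (nat (- n))"]
    by (cases "n \<ge> 0") simp_all
qed

lemma abs_value_of_int_coprime: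
  fixes av :: "'a::field \<Rightarrow> real"
  assumes av: "abs_value av" and avp: "av (of_nat p) = 1 / real p"
    and "prime p" and "\<not> int p dvd n"
  shows "av (of_int n :: 'a) = 1"
proof -
  have "coprime (int p) n"
    using assms(3,4) by (metis prime_imp_coprime prime_nat_int_transfer)
  then obtain u v where uv: "u * int p + v * n = 1" using bezout_int[of "int p" n] by auto
  have "(1::'a) = of_int u * of_nat p + of_int v * of_int n"
    using arg_cong[OF uv, of "of_int :: int \<Rightarrow> 'a"] by simp
  then have "1 \<le> max (av (of_int u * of_nat p)) (av (of_int v * (of_int n :: 'a)))"
    using abs_value_add_le[OF av] abs_value_one[OF av] by metis
  moreover have "av (of_int u * (of_nat p :: 'a)) < 1"
  proof -
    have "av (of_int u * (of_nat p :: 'a)) \<le> 1 / real p"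
      using abs_value_of_int_le_1[OF av, of u] abs_value_nonneg[OF av, of "of_int u"]
      by (simp add: abs_value_mult[OF av] avp divide_right_mono)
    also have "\<dots> < 1" using prime_gt_1_nat[OF assms(3)] by simp
    finally show ?thesis .
  qed
  moreover have "av (of_int v * (of_int n :: 'a)) \<le> av (of_int n :: 'a)"
    using abs_value_of_int_le_1[OF av, of v] abs_value_nonneg[OF av]
    by (simp add: abs_value_mult[OF av] mult_left_le_one_le)
  ultimately show ?thesis using abs_value_of_int_le_1[OF av, of n] by linarith
qed

lemma abs_value_of_int:
  fixes av :: "'a::field \<Rightarrow> real"
  assumes av: "abs_value av" and avp: "av (of_nat p) = 1 / real p"
    and "prime p" and "n \<noteq> 0"
  shows "av (of_int n :: 'a) = (1 / real p) ^ multiplicity (int p) n"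
proof -
  have "\<not> is_unit (int p)" using prime_gt_1_nat[OF assms(3)] by simp
  then obtain m where m: "n = int p ^ multiplicity (int p) n * m" "\<not> int p dvd m"
    using multiplicity_decompose'[OF assms(4)] by metis
  have "av (of_int m :: 'a) = 1" using abs_value_of_int_coprime[OF av avp assms(3) m(2)] .
  then show ?thesis
    by (subst m(1)) (simp add: abs_value_mult[OF av] abs_value_power[OF av] avp)
qed

lemma abs_value_of_int_less_gap:
  fixes av :: "'a::field \<Rightarrow> real"
  assumes av: "abs_value av" and avp: "av (of_nat p) = 1 / real p"
    and "prime p" and "c > 0"
  obtains r where "r < c" "\<And>n. av (of_int n :: 'a) < c \<Longrightarrow> av (of_int n :: 'a) \<le> r"
proof -
  have p1: "real p > 1" using prime_gt_1_nat[OF assms(3)] by simp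
  have "\<exists>j. (1 / real p) ^ j < c" using p1 assms(4) by (intro real_arch_pow_inv) auto
  define j where "j = (LEAST j. (1 / real p) ^ j < c)"
  have j: "(1 / real p) ^ j < c" unfolding j_def by (rule LeastI_ex) fact
  have "av (of_int n :: 'a) \<le> (1 / real p) ^ j" if "av (of_int n :: 'a) < c" for n
  proof (cases "n = 0")
    case False
    with that have "j \<le> multiplicity (int p) n"
      unfolding j_def by (intro Least_le) (simp add: abs_value_of_int[OF av avp assms(3)])
    then show ?thesis
      using p1 by (simp add: abs_value_of_int[OF av avp assms(3) False] power_decreasing)
  qed (simp add: abs_value_zero[OF av])
  with j p1 that[of "(1 / real p) ^ j"] show ?thesis by simp
qed

section \<open>Divided differences\<close>

fun divided_diff :: "'a::field list \<Rightarrow> ('a \<Rightarrow> 'a) \<Rightarrow> 'a" where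
  "divided_diff [] g = 0"
| "divided_diff [a] g = g a"
| "divided_diff (a # b # zs) g = (divided_diff (a # zs) g - divided_diff (b # zs) g) / (a - b)"

fun complete_hom :: "'a::comm_ring_1 list \<Rightarrow> nat \<Rightarrow> 'a" where
  "complete_hom [] 0 = 1"
| "complete_hom [] (Suc k) = 0"
| "complete_hom (a # zs) 0 = 1"
| "complete_hom (a # zs) (Suc k) = complete_hom zs (Suc k) + a * complete_hom (a # zs) k"

lemma list_induct_two_heads:
  "P [] \<Longrightarrow> (\<And>a. P [a]) \<Longrightarrow> (\<And>a b zs. P (a # zs) \<Longrightarrow> P (b # zs) \<Longrightarrow> P (a # b # zs)) \<Longrightarrow> P xs"
proof (induction xs rule: measure_induct_rule[of length])
  case (less xs)
  then show ?case by (cases xs rule: remdups_adj.cases) auto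
qed

lemma complete_hom_0 [simp]: "complete_hom zs 0 = 1"
  by (cases zs) auto

lemma complete_hom_Cons_diff:
  "complete_hom (a # zs) (Suc k) - complete_hom (b # zs) (Suc k) = (a - b) * complete_hom (a # b # zs) k"
proof (induction k)
  case (Suc k)
  have "complete_hom (a # zs) (Suc (Suc k)) - complete_hom (b # zs) (Suc (Suc k))
      = a * (complete_hom (a # zs) (Suc k) - complete_hom (b # zs) (Suc k))
        + (a - b) * complete_hom (b # zs) (Suc k)"
    by (simp add: algebra_simps)
  also have "\<dots> = (a - b) * complete_hom (a # b # zs) (Suc k)"
    by (simp only: Suc) (simp add: algebra_simps)
  finally show ?case .
qed simp

lemma divided_diff_power:
  assumes "distinct zs" "zs \<noteq> []"
  shows "divided_diff zs (\<lambda>z. z ^ m) =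
    (if length zs \<le> Suc m then complete_hom zs (Suc m - length zs) else 0)"
  using assms
proof (induction zs arbitrary: m rule: list_induct_two_heads)
  case (2 a)
  then show ?case by (induction m) simp_all
next
  case (3 a b zs)
  have ab: "a \<noteq> b" using "3.prems" by simp
  have IH: "divided_diff (c # zs) (\<lambda>z. z ^ m) =
      (if length zs \<le> m then complete_hom (c # zs) (m - length zs) else 0)" if "c \<in> {a, b}" for c
    using 3 that by auto
  consider "m < length zs" | "m = length zs" | k where "m - length zs = Suc k"
    using less_linear[of m "length zs"] by (cases "m - length zs") auto
  then show ?case
  proof cases
    case 3
    then have "length zs \<le> m" by simp
    have "divided_diff (a # b # zs) (\<lambda>z. z ^ m)
        = (complete_hom (a # zs) (Suc k) - complete_hom (b # zs) (Suc k)) / (a - b)"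
      using IH[of a] IH[of b] 3 \<open>length zs \<le> m\<close> by (simp del: complete_hom.simps)
    also have "\<dots> = complete_hom (a # b # zs) k"
      using complete_hom_Cons_diff[of a zs k b] ab by simp
    finally have "divided_diff (a # b # zs) (\<lambda>z. z ^ m) = complete_hom (a # b # zs) k" .
    moreover have "Suc (length zs) \<le> m" "m - Suc (length zs) = k" using 3 by arith+
    ultimately show ?thesis by (simp del: divided_diff.simps complete_hom.simps)
  qed (use IH in simp_all)
qed simp

lemma divided_diff_sum:
  "divided_diff zs (\<lambda>z. \<Sum>m\<in>S. c m * g m z) = (\<Sum>m\<in>S. c m * divided_diff zs (g m))"
proof (induction zs rule: list_induct_two_heads)
  case (3 a b zs)
  then show ?case by (simp add: sum_subtractf[symmetric] sum_divide_distrib right_diff_distrib)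
qed simp_all

lemma divided_diff_power_series:
  assumes "distinct zs" "length zs = Suc N"
  shows "divided_diff zs (\<lambda>z. \<Sum>n<K. f n * z ^ n) = (\<Sum>n\<in>{N..<K}. f n * complete_hom zs (n - N))"
proof -
  have power: "divided_diff zs (\<lambda>z. z ^ n) = (if N \<le> n then complete_hom zs (n - N) else 0)" for n
    using divided_diff_power[OF assms(1), of n] assms(2) by (cases zs) auto
  have "divided_diff zs (\<lambda>z. \<Sum>n<K. f n * z ^ n) =
      (\<Sum>n<K. f n * (if N \<le> n then complete_hom zs (n - N) else 0))"
    by (simp add: divided_diff_sum power)
  also have "\<dots> = (\<Sum>n\<in>{N..<K}. f n * complete_hom zs (n - N))"
    by (rule sum.mono_neutral_cong_right) auto
  finally show ?thesis .
qed

lemma abs_value_complete_hom_le: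
  assumes av: "abs_value av" and "\<forall>z\<in>set zs. av z \<le> r" and "0 \<le> r"
  shows "av (complete_hom zs k) \<le> r ^ k"
  using assms(2)
proof (induction zs k rule: complete_hom.induct)
  case (4 a zs k)
  then have "av (a * complete_hom (a # zs) k) \<le> r * r ^ k"
    by (simp add: abs_value_mult[OF av] abs_value_nonneg[OF av] mult_mono')
  with 4 show ?case
    using abs_value_add_le[OF av, of "complete_hom zs (Suc k)" "a * complete_hom (a # zs) k"] by simp
qed (simp_all add: abs_value_one[OF av] abs_value_zero[OF av] assms(3))

lemma divided_diff_tendsto_zero:
  assumes av: "abs_value av" and "\<forall>z\<in>set zs. (\<lambda>K. av (g K z)) \<longlonglongrightarrow> 0"
  shows "(\<lambda>K. av (divided_diff zs (g K))) \<longlonglongrightarrow> 0"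
  using assms(2)
proof (induction zs rule: list_induct_two_heads)
  case 1
  show ?case by (simp add: abs_value_zero[OF av])
next
  case (2 a)
  then show ?case by simp
next
  case (3 a b zs)
  let ?u = "\<lambda>K. av (divided_diff (a # zs) (g K))" and ?v = "\<lambda>K. av (divided_diff (b # zs) (g K))"
  have "(\<lambda>K. ?u K + ?v K) \<longlonglongrightarrow> 0 + 0"
    using 3 by (intro tendsto_intros) auto
  then have upper: "(\<lambda>K. (?u K + ?v K) / av (a - b)) \<longlonglongrightarrow> 0"
    using tendsto_divide_zero by fastforce
  have bound: "av (divided_diff (a # b # zs) (g K)) \<le> (?u K + ?v K) / av (a - b)" for K
  proof -
    have "av (divided_diff (a # zs) (g K) - divided_diff (b # zs) (g K)) \<le> max (?u K) (?v K)"
      by (rule abs_value_diff_le[OF av])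
    also have "\<dots> \<le> ?u K + ?v K"
      using abs_value_nonneg[OF av] by (simp add: max_def)
    finally have "av (divided_diff (a # zs) (g K) - divided_diff (b # zs) (g K)) \<le> ?u K + ?v K" .
    then show ?thesis
      by (simp add: abs_value_divide[OF av] abs_value_nonneg[OF av] divide_right_mono)
  qed
  show ?case
  proof (rule tendsto_sandwich[OF _ _ tendsto_const upper])
    show "\<forall>\<^sub>F K in sequentially. 0 \<le> av (divided_diff (a # b # zs) (g K))"
      using abs_value_nonneg[OF av] by (intro always_eventually) blast
    show "\<forall>\<^sub>F K in sequentially. av (divided_diff (a # b # zs) (g K)) \<le> (?u K + ?v K) / av (a - b)"
      using bound by (intro always_eventually) blast
  qed
qed

lemma abs_value_divided_diff_power_series:
  assumes av: "abs_value av" and zs: "distinct zs" "length zs = Suc N" "\<forall>z\<in>set zs. av z \<le> r"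
    and "0 < r" and dominant: "\<And>n. n > N \<Longrightarrow> av (f n) * r ^ n < av (f N) * r ^ N" and "N < K"
  shows "av (divided_diff zs (\<lambda>z. \<Sum>n<K. f n * z ^ n)) = av (f N)"
proof -
  have "divided_diff zs (\<lambda>z. \<Sum>n<K. f n * z ^ n) =
      f N + (\<Sum>n\<in>{Suc N..<K}. f n * complete_hom zs (n - N))"
    using \<open>N < K\<close> by (simp add: divided_diff_power_series[OF zs(1,2)] sum.atLeast_Suc_lessThan)
  moreover have "av (\<Sum>n\<in>{Suc N..<K}. f n * complete_hom zs (n - N)) < av (f N)"
  proof (rule abs_value_sum_less[OF av], simp, intro ballI)
    fix n assume "n \<in> {Suc N..<K}"
    then have "N < n" by simp
    have "av (f n * complete_hom zs (n - N)) \<le> av (f n) * r ^ (n - N)"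
      using abs_value_complete_hom_le[OF av zs(3)] \<open>0 < r\<close>
      by (simp add: abs_value_mult[OF av] abs_value_nonneg[OF av] mult_left_mono)
    also have "\<dots> < av (f N)"
    proof -
      have "av (f n) * r ^ (n - N) * r ^ N < av (f N) * r ^ N"
        using dominant[OF \<open>N < n\<close>] \<open>N < n\<close> by (simp add: mult.assoc power_add[symmetric])
      then show ?thesis using \<open>0 < r\<close> by simp
    qed
    finally show "av (f n * complete_hom zs (n - N)) < av (f N)" .
  next
    have "0 \<le> av (f (Suc N)) * r ^ Suc N"
      using abs_value_nonneg[OF av] \<open>0 < r\<close> by simp
    then have "0 < av (f N) * r ^ N" using dominant[of "Suc N"] by simp
    then show "0 < av (f N)" using \<open>0 < r\<close> by (simp add: zero_less_mult_iff)
  qed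
  ultimately show ?thesis by (simp add: abs_value_add_eq_left[OF av])
qed

section \<open>Bounded power series with infinitely many zeros\<close>

lemma LIMSEQ_zero_last_index_above:
  fixes b :: "nat \<Rightarrow> real"
  assumes "b \<longlonglongrightarrow> 0" and "b m > 0"
  obtains N where "b m \<le> b N" and "\<And>n. N < n \<Longrightarrow> b n < b N"
proof -
  obtain n0 where n0: "\<And>n. n0 \<le> n \<Longrightarrow> b n < b m"
    using order_tendstoD(2)[OF assms] by (auto simp: eventually_sequentially)
  define S where "S = {n. b m \<le> b n}"
  have "S \<subseteq> {..<n0}"
  proof
    fix n assume "n \<in> S"
    then have "\<not> b n < b m" by (simp add: S_def)
    then show "n \<in> {..<n0}" using n0[of n] by (metis lessThan_iff not_le)
  qed
  then have "finite S" by (rule finite_subset) simp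
  have "Max S \<in> S" using \<open>finite S\<close> by (rule Max_in) (auto simp: S_def)
  show ?thesis
  proof (rule that)
    show "b m \<le> b (Max S)" using \<open>Max S \<in> S\<close> by (simp add: S_def)
    show "b n < b (Max S)" if "Max S < n" for n
    proof -
      have "n \<notin> S" using Max_ge[OF \<open>finite S\<close>, of n] that by auto
      then show ?thesis using \<open>b m \<le> b (Max S)\<close> by (simp add: S_def)
    qed
  qed
qed

lemma abs_value_dominant_index:
  fixes f :: "nat \<Rightarrow> 'a::field"
  assumes av: "abs_value av" and bounded: "\<And>n. av (f n) \<le> M" and "0 < r" "r < 1" and "f m \<noteq> 0"
  obtains N where "f N \<noteq> 0" and "\<And>n. N < n \<Longrightarrow> av (f n) * r ^ n < av (f N) * r ^ N"
proof -
  define b where "b n = av (f n) * r ^ n" for n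
  have "(\<lambda>n. M * r ^ n) \<longlonglongrightarrow> M * 0"
    using \<open>0 < r\<close> \<open>r < 1\<close> by (intro tendsto_intros LIMSEQ_power_zero) simp
  then have upper: "(\<lambda>n. M * r ^ n) \<longlonglongrightarrow> 0" by simp
  have "b \<longlonglongrightarrow> 0"
  proof (rule tendsto_sandwich[OF _ _ tendsto_const upper])
    show "\<forall>\<^sub>F n in sequentially. 0 \<le> b n"
      using \<open>0 < r\<close> by (simp add: b_def abs_value_nonneg[OF av])
    show "\<forall>\<^sub>F n in sequentially. b n \<le> M * r ^ n"
      using \<open>0 < r\<close> by (simp add: b_def bounded mult_right_mono)
  qed
  moreover have "b m > 0"
    using \<open>f m \<noteq> 0\<close> \<open>0 < r\<close> abs_value_pos[OF av] by (simp add: b_def)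
  ultimately obtain N where "b m \<le> b N" and "\<And>n. N < n \<Longrightarrow> b n < b N"
    using LIMSEQ_zero_last_index_above by blast
  moreover have "f N \<noteq> 0"
    using \<open>b m \<le> b N\<close> \<open>b m > 0\<close> by (auto simp: b_def abs_value_zero[OF av])
  ultimately show ?thesis using that by (simp add: b_def)
qed

lemma bounded_fps_eq_0_if_infinitely_many_zeros:
  fixes f :: "'a::field fps"
  assumes av: "abs_value av" and bounded: "\<And>m. av (fps_nth f m) \<le> M" and "r < 1"
    and "infinite Z" and small: "\<And>z. z \<in> Z \<Longrightarrow> av z \<le> r"
    and zero: "\<And>z. z \<in> Z \<Longrightarrow> eval_at av f z 0"
  shows "f = 0"
proof (rule fps_ext, rule ccontr)
  fix m assume "fps_nth f m \<noteq> fps_nth 0 m"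
  have "infinite (Z - {0})" using \<open>infinite Z\<close> by simp
  then obtain z where "z \<in> Z" "z \<noteq> 0" using infinite_imp_nonempty by blast
  then have "0 < r" using small[of z] abs_value_pos[OF av, of z] by simp
  moreover have "fps_nth f m \<noteq> 0" using \<open>fps_nth f m \<noteq> fps_nth 0 m\<close> by simp
  ultimately obtain N where "fps_nth f N \<noteq> 0" and dominant:
    "\<And>n. N < n \<Longrightarrow> av (fps_nth f n) * r ^ n < av (fps_nth f N) * r ^ N"
    using abs_value_dominant_index[of av "fps_nth f" M r m] av bounded \<open>r < 1\<close> by blast
  obtain Z' where "finite Z'" "card Z' = Suc N" "Z' \<subseteq> Z"
    using infinite_arbitrarily_large[OF \<open>infinite Z\<close>] by blast
  then obtain zs where zs: "distinct zs" "length zs = Suc N" "set zs \<subseteq> Z"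
    using finite_distinct_list distinct_card by metis
  let ?D = "\<lambda>K. av (divided_diff zs (\<lambda>z. \<Sum>n<K. fps_nth f n * z ^ n))"
  have "?D \<longlonglongrightarrow> 0"
    using zs(3) zero by (intro divided_diff_tendsto_zero[OF av]) (auto simp: eval_at_def av_converges_def)
  moreover have "\<forall>\<^sub>F K in sequentially. ?D K = av (fps_nth f N)"
    using zs small dominant \<open>0 < r\<close> unfolding eventually_sequentially
    by (intro exI[of _ "Suc N"] allI impI abs_value_divided_diff_power_series[OF av]) auto
  ultimately have "(\<lambda>K. av (fps_nth f N)) \<longlonglongrightarrow> 0"
    using tendsto_cong by fastforce
  then have "av (fps_nth f N) = 0" by (rule LIMSEQ_const_iff[THEN iffD1])
  then show False using \<open>fps_nth f N \<noteq> 0\<close> abs_value_pos[OF av] by fastforce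
qed

section \<open>The ideals \<open>(P)\<close>\<close>

lemma eval_at_zero_fps_const_mult_iff:
  assumes av: "abs_value av" and "c \<noteq> 0"
  shows "eval_at av (fps_const c * f) y 0 \<longleftrightarrow> eval_at av f y 0"
proof -
  have "av (\<Sum>m<N. fps_nth (fps_const c * f) m * y ^ m) = av c * av (\<Sum>m<N. fps_nth f m * y ^ m)" for N
    by (simp add: sum_distrib_left mult.assoc abs_value_mult[OF av, symmetric])
  moreover have "av c \<noteq> 0" using abs_value_pos[OF av \<open>c \<noteq> 0\<close>] by simp
  ultimately show ?thesis
    using tendsto_mult_left_iff[of "av c" "\<lambda>N. av (\<Sum>m<N. fps_nth f m * y ^ m)" 0 sequentially]
    by (simp add: eval_at_def av_converges_def)
qed

lemma abs_value_fps_mult_nth_le: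
  assumes av: "abs_value av" and "Q \<in> Lambda av" and bounded: "\<And>m. av (fps_nth g m) \<le> K"
  shows "av (fps_nth (Q * g) m) \<le> K"
proof -
  have "0 \<le> K" using bounded[of 0] abs_value_nonneg[OF av] by (rule order_trans[rotated])
  moreover have "av (fps_nth Q i * fps_nth g (m - i)) \<le> K" for i
  proof -
    have "av (fps_nth Q i) \<le> 1" using \<open>Q \<in> Lambda av\<close> by (simp add: Lambda_def int_ring_def)
    then have "av (fps_nth Q i) * av (fps_nth g (m - i)) \<le> av (fps_nth g (m - i))"
      by (simp add: abs_value_nonneg[OF av] mult_left_le_one_le)
    then show ?thesis using bounded[of "m - i"] by (simp add: abs_value_mult[OF av])
  qed
  ultimately show ?thesis by (simp add: fps_mult_nth abs_value_sum_le[OF av])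
qed

lemma Lambda_mult: "abs_value av \<Longrightarrow> Q \<in> Lambda av \<Longrightarrow> g \<in> Lambda av \<Longrightarrow> Q * g \<in> Lambda av"
  using abs_value_fps_mult_nth_le[of av Q g 1] by (simp add: Lambda_def int_ring_def)

lemma eval_at_zero_of_bounded_multiple:
  assumes av: "abs_value av" and avp: "av (of_nat p) = 1 / real p" and "1 < p"
    and vanish: "\<And>g. g \<in> Lambda av \<Longrightarrow> eval_at av (Q * g) y 0"
    and bounded: "\<And>m. av (fps_nth g m) \<le> K"
  shows "eval_at av (Q * g) y 0"
proof -
  have "0 \<le> K" using bounded[of 0] abs_value_nonneg[OF av] by (rule order_trans[rotated])
  obtain j where j: "(1 / real p) ^ j < 1 / (K + 1)"
    using real_arch_pow_inv[of "1 / (K + 1)" "1 / real p"] \<open>1 < p\<close> \<open>0 \<le> K\<close> by auto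
  define c where "c = (of_nat p :: 'a) ^ j"
  have avc: "av c = (1 / real p) ^ j" by (simp add: c_def abs_value_power[OF av] avp)
  then have "c \<noteq> 0" using \<open>1 < p\<close> abs_value_zero[OF av] by auto
  have "av c * K \<le> av c * (K + 1)" using abs_value_nonneg[OF av, of c] by (simp add: mult_left_mono)
  also have "\<dots> < 1" using j \<open>0 \<le> K\<close> avc by (simp add: field_simps)
  finally have "av c * K \<le> 1" by simp
  then have "av (c * fps_nth g m) \<le> 1" for m
    using mult_left_mono[OF bounded[of m] abs_value_nonneg[OF av, of c]]
    by (simp add: abs_value_mult[OF av])
  then have "fps_const c * g \<in> Lambda av" by (simp add: Lambda_def int_ring_def)
  then have "eval_at av (fps_const c * (Q * g)) y 0"
    using vanish by (simp add: mult.left_commute)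
  then show ?thesis using eval_at_zero_fps_const_mult_iff[OF av \<open>c \<noteq> 0\<close>] by simp
qed

lemma zero_mem_P_ideal: "abs_value av \<Longrightarrow> (\<lambda>d. 0) \<in> P_ideal p av h Q"
  unfolding P_ideal_def HLam_ring_def by (auto simp: abs_value_zero intro!: exI[of _ "\<lambda>d. 0"])

lemma P_ideal_coeff_eq_mult:
  assumes "F \<in> P_ideal p av h Q"
  obtains g K where "fps_nth (F d) n = Q * g" and "\<And>m. av (fps_nth g m) \<le> K"
proof -
  obtain G C where "F = (\<lambda>d. fps_const Q * G d)"
    and "\<And>d n m. av (fps_nth (fps_nth (G d) n) m) \<le> real p powr (C + h * ell p n)"
    using assms unfolding P_ideal_def HLam_ring_def by blast
  then show ?thesis by (intro that[of "fps_nth (G d) n" "real p powr (C + h * ell p n)"]) auto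
qed

lemma P_ideal_coeff_bounded_vanishing:
  assumes av: "abs_value av" and avp: "av (of_nat p) = 1 / real p" and "1 < p"
    and "Q \<in> Lambda av" and vanish: "\<And>g. g \<in> Lambda av \<Longrightarrow> eval_at av (Q * g) y 0"
    and "F \<in> P_ideal p av h Q"
  shows "\<exists>K. \<forall>m. av (fps_nth (fps_nth (F d) n) m) \<le> K" and "eval_at av (fps_nth (F d) n) y 0"
proof -
  obtain g K where eq: "fps_nth (F d) n = Q * g" and bounded: "\<And>m. av (fps_nth g m) \<le> K"
    using P_ideal_coeff_eq_mult[OF \<open>F \<in> P_ideal p av h Q\<close>, where d = d and n = n] by blast
  show "\<exists>K. \<forall>m. av (fps_nth (fps_nth (F d) n) m) \<le> K"
    using abs_value_fps_mult_nth_le[OF av \<open>Q \<in> Lambda av\<close> bounded] eq by auto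
  show "eval_at av (fps_nth (F d) n) y 0"
    using eval_at_zero_of_bounded_multiple[OF av avp \<open>1 < p\<close> vanish bounded] eq by simp
qed

lemma Inter_P_ideal_eq_zero:
  fixes y :: "'i \<Rightarrow> 'a::field" and Q :: "'i \<Rightarrow> 'a fps"
  assumes av: "abs_value av" and avp: "av (of_nat p) = 1 / real p" and "1 < p"
    and "infinite (y ` I)" and "\<rho> < 1" and small: "\<And>i. i \<in> I \<Longrightarrow> av (y i) \<le> \<rho>"
    and Q: "\<And>i. i \<in> I \<Longrightarrow> Q i \<in> Lambda av"
    and vanish: "\<And>i g. i \<in> I \<Longrightarrow> g \<in> Lambda av \<Longrightarrow> eval_at av (Q i * g) (y i) 0"
  shows "(\<Inter>i\<in>I. P_ideal p av h (Q i)) = {\<lambda>d. 0}"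
proof -
  have coeffs_vanish: "F d = 0" if F: "F \<in> (\<Inter>i\<in>I. P_ideal p av h (Q i))" for F d
  proof (rule fps_ext)
    fix n
    note coeff = P_ideal_coeff_bounded_vanishing[OF av avp \<open>1 < p\<close> Q vanish, where d = d and n = n]
    obtain i where "i \<in> I" using infinite_imp_nonempty[OF assms(4)] by blast
    then obtain K where bounded: "\<And>m. av (fps_nth (fps_nth (F d) n) m) \<le> K"
      using coeff(1)[of i F] F by blast
    have zero: "eval_at av (fps_nth (F d) n) z 0" if "z \<in> y ` I" for z
      using that coeff(2) F by blast
    have "fps_nth (F d) n = 0"
      using small by (intro bounded_fps_eq_0_if_infinitely_many_zeros[OF av bounded \<open>\<rho> < 1\<close>
          \<open>infinite (y ` I)\<close> _ zero]) blast+
    then show "fps_nth (F d) n = fps_nth 0 n" by simp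
  qed
  show ?thesis
  proof
    show "(\<Inter>i\<in>I. P_ideal p av h (Q i)) \<subseteq> {\<lambda>d. 0}"
      using coeffs_vanish by (auto intro!: ext)
    show "{\<lambda>d. 0} \<subseteq> (\<Inter>i\<in>I. P_ideal p av h (Q i))"
      using zero_mem_P_ideal[OF av] by blast
  qed
qed

theorem lemma4p2:
  fixes p :: nat and av :: "'a::field_char_0 \<Rightarrow> real" and k :: int and e0 :: 'a
    and h :: real and B :: "int set" and P :: "int \<Rightarrow> 'a fps"
  assumes "prime p" and "p \<ge> 5"
    and "finite_ext_Qp p av"
    and "even k" and "k \<ge> 2"
    and "e0 \<noteq> 0"
    and "av e0 > real p powr (- ((real p - 1) / (real p - 2)))"
    and "infinite B"
    and "\<forall>\<kappa>\<in>B. av (of_int (\<kappa> - k)) < av e0"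
    and "\<forall>\<kappa>\<in>B. P \<kappa> \<in> Lambda av \<and>
           (\<forall>f\<in>Lambda av. eval_at av f (of_int (\<kappa> - k) / e0) 0 \<longleftrightarrow>
                           (\<exists>g\<in>Lambda av. f = P \<kappa> * g))"
    and "h \<ge> 0"
  shows "(\<Inter>\<kappa>\<in>B. (P_ideal p av h (P \<kappa>) :: ('d::finite \<Rightarrow> 'a fps fps) set)) = {(\<lambda>d. 0)}"
proof -
  have av: "abs_value av" and avp: "av (of_nat p) = 1 / real p"
    using assms(3) by (auto simp: finite_ext_Qp_def)
  have "0 < av e0" using abs_value_pos[OF av assms(6)] .
  then obtain r where "r < av e0" and r: "\<And>n. av (of_int n :: 'a) < av e0 \<Longrightarrow> av (of_int n :: 'a) \<le> r"
    using abs_value_of_int_less_gap[OF av avp assms(1)] by blast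
  define y where "y \<kappa> = of_int (\<kappa> - k) / e0" for \<kappa>
  have small: "av (y \<kappa>) \<le> r / av e0" if "\<kappa> \<in> B" for \<kappa>
  proof -
    have "av (of_int (\<kappa> - k) :: 'a) \<le> r" using r assms(9) that by blast
    then show ?thesis
      using \<open>0 < av e0\<close> by (simp add: y_def abs_value_divide[OF av] divide_right_mono del: of_int_diff)
  qed
  have "infinite (y ` B)"
    using assms(6,8) by (auto simp: y_def inj_on_def dest: finite_imageD)
  have "r / av e0 < 1" using \<open>r < av e0\<close> \<open>0 < av e0\<close> by simp
  have PL: "P \<kappa> \<in> Lambda av" if "\<kappa> \<in> B" for \<kappa>
    using assms(10) that by blast
  have vanish: "eval_at av (P \<kappa> * g) (y \<kappa>) 0" if "\<kappa> \<in> B" "g \<in> Lambda av" for \<kappa> g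
  proof -
    have "\<forall>f\<in>Lambda av. eval_at av f (y \<kappa>) 0 \<longleftrightarrow> (\<exists>g\<in>Lambda av. f = P \<kappa> * g)"
      using assms(10) that(1) unfolding y_def by blast
    then show ?thesis using Lambda_mult[OF av PL[OF that(1)] that(2)] that(2) by blast
  qed
  show ?thesis
    by (rule Inter_P_ideal_eq_zero[OF av avp prime_gt_1_nat[OF assms(1)] \<open>infinite (y ` B)\<close>
          \<open>r / av e0 < 1\<close> small PL vanish])
qed

end
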